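(* Let $j\ge 2$ be an integer and let $\bar\alpha_j$ be the largest $\alpha\ge 0$ such that $\left(1-e^{-\alpha^{j-1}x^{j-1}}\right)^{j-1}\le x$ for all $x\in(0,1]$. For $\alpha>0$ and an integer $k\ge 2$ with $\delta:=\alpha(k-1)^{-j/(j-1)}\le 1$, define the sequence $x_0=\delta$ and $$x_{i+1}=\delta\left(1-\Bigl[1-(1-\delta)\bigl(1-(1-x_i)^{k-1}\bigr)^{j-1}-x_i\Bigr]^{k-1}\right)^{j-1},\quad i\ge 0.$$ (a) If $\alpha<\bar\alpha_j$, there exists $K_1<\infty$ such that for all $k\ge K_1$, $x_i\to 0$ as $i\to\infty$. (b) If $\alpha>\bar\alpha_j$, there exists $K_2<\infty$ such that for all $k\ge K_2$, $x_i$ does not converge to $0$.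
   Context: The recursion is the density evolution of the LM1 verification-decoding algorithm (Luby–Mitzenmacher) for a $(j,k)$-regular LDPC code on the $q$-ary symmetric channel with error probability $\delta$ (equivalently, LM1 reconstruction of a strictly sparse signal whose fraction of nonzero entries is $\delta$); $x_i$ is the fraction of unverified messages after $i$ iterations, and $x_i\to0$ corresponds to successful decoding/reconstruction with high probability as the block length tends to infinity. *)

theory Defs
  imports Complex_Main
begin

definition alpha_bar :: "nat \<Rightarrow> real" where
  "alpha_bar j = (GREATEST \<alpha>. \<alpha> \<ge> 0 \<and>
     (\<forall>x\<in>{0<..1}. (1 - exp (- (\<alpha> ^ (j - 1) * x ^ (j - 1)))) ^ (j - 1) \<le> x))"

definition lm1_delta :: "nat \<Rightarrow> nat \<Rightarrow> real \<Rightarrow> real" where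
  "lm1_delta j k \<alpha> = \<alpha> * (real k - 1) powr (- (real j / (real j - 1)))"

fun lm1_seq :: "nat \<Rightarrow> nat \<Rightarrow> real \<Rightarrow> nat \<Rightarrow> real" where
  "lm1_seq j k \<delta> 0 = \<delta>"
| "lm1_seq j k \<delta> (Suc i) =
     (let x = lm1_seq j k \<delta> i in
      \<delta> * (1 - (1 - (1 - \<delta>) * (1 - (1 - x) ^ (k - 1)) ^ (j - 1) - x) ^ (k - 1)) ^ (j - 1))"

end

theory Submission
  imports Defs "HOL-Analysis.Elementary_Metric_Spaces"
begin

(* Write m = j - 1, d = k - 1 and scale the state as x = delta * y.  With
   eps = d * delta one has d * eps^m = alpha^m, and both delta and eps tend
   to 0 as k grows.  In these coordinates one step of the recursion is
   squeezed between two perturbations of the limiting profile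
   y |-> (1 - exp (- alpha^m * y^m))^m, the perturbations vanishing as k grows. *)

lemma one_minus_pow_le_exp:
  fixes u :: real assumes "u \<le> 1"
  shows "(1 - u) ^ d \<le> exp (- (real d * u))"
proof -
  have "(1 - u) ^ d \<le> exp (- u) ^ d"
    using assms exp_ge_add_one_self[of "- u"] by (intro power_mono) auto
  thus ?thesis by (simp add: exp_of_nat_mult[symmetric])
qed

(* Reverse estimate for small u, from ln(1 - u) >= -u - 2u^2; used for the upper bound. *)
lemma exp_le_one_minus_pow:
  fixes u :: real assumes "0 \<le> u" "u \<le> 1/2"
  shows "exp (- (real d * u * (1 + 2 * u))) \<le> (1 - u) ^ d"
proof -
  have "real d * (- u - 2 * u\<^sup>2) \<le> real d * ln (1 - u)"
    using ln_one_minus_pos_lower_bound[OF assms] by (intro mult_left_mono) auto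
  hence "exp (- (real d * u * (1 + 2 * u))) \<le> exp (real d * ln (1 - u))"
    by (simp add: algebra_simps power2_eq_square)
  also have "\<dots> = (1 - u) ^ d" using assms by (simp add: exp_of_nat_mult)
  finally show ?thesis .
qed

lemma one_minus_pow_bounds:
  fixes x :: real assumes "0 \<le> x" "x \<le> 1"
  shows "real d * x / (1 + real d * x) \<le> 1 - (1 - x) ^ d" "1 - (1 - x) ^ d \<le> real d * x"
proof -
  have pos: "0 < 1 + real d * x" using assms by (simp add: add_pos_nonneg)
  have "(1 - x) ^ d \<le> exp (- (real d * x))" using one_minus_pow_le_exp assms by simp
  also have "\<dots> \<le> 1 / (1 + real d * x)"
  proof -
    have "1 + real d * x \<le> exp (real d * x)" by (rule exp_ge_add_one_self)
    thus ?thesis using pos by (simp add: exp_minus inverse_eq_divide le_divide_eq)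
  qed
  moreover have "real d * x / (1 + real d * x) = 1 - 1 / (1 + real d * x)"
    using pos by (simp add: field_simps)
  ultimately show "real d * x / (1 + real d * x) \<le> 1 - (1 - x) ^ d" by linarith
  show "1 - (1 - x) ^ d \<le> real d * x"
    using Bernoulli_inequality[of "- x" d] assms by simp
qed

(* The limiting profile of one decoding round after the scaling x = delta * y;
   the threshold condition reads profile m (alpha^m) y <= y. *)
definition profile :: "nat \<Rightarrow> real \<Rightarrow> real \<Rightarrow> real" where
  "profile m c y = (1 - exp (- (c * y ^ m))) ^ m"

lemma profile_strict_mono_coeff:
  assumes "m \<ge> 1" "0 \<le> c" "c < c'" "y > 0"
  shows "profile m c y < profile m c' y"
proof -
  have "c * y ^ m < c' * y ^ m"
    using assms by (intro mult_strict_right_mono) auto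
  hence "1 - exp (- (c * y ^ m)) < 1 - exp (- (c' * y ^ m))" by simp
  moreover have "0 \<le> 1 - exp (- (c * y ^ m))" using assms by simp
  ultimately show ?thesis unfolding profile_def using assms by (intro power_strict_mono) auto
qed

lemma profile_mono_arg:
  assumes "0 \<le> c" "0 \<le> y" "y \<le> y'"
  shows "profile m c y \<le> profile m c y'"
proof -
  have "c * y ^ m \<le> c * y' ^ m"
    using assms by (intro mult_left_mono power_mono) auto
  hence "1 - exp (- (c * y ^ m)) \<le> 1 - exp (- (c * y' ^ m))" by simp
  moreover have "0 \<le> 1 - exp (- (c * y ^ m))" using assms by simp
  ultimately show ?thesis unfolding profile_def by (intro power_mono) auto
qed

definition admissible :: "nat \<Rightarrow> real \<Rightarrow> bool" where
  "admissible m a \<longleftrightarrow> 0 \<le> a \<and> (\<forall>x\<in>{0<..1}. profile m (a ^ m) x \<le> x)"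

(* Admissible values are bounded: a large alpha pushes the profile above 1/2 at y = 1/2. *)
lemma admissible_le:
  assumes m: "m \<ge> 1" and adm: "admissible m a"
  shows "a \<le> 4 * real m"
proof (rule ccontr)
  assume "\<not> a \<le> 4 * real m"
  hence a: "a > 4 * real m" by simp
  define t where "t = a ^ m * (1/2) ^ m"
  have "(a/2) ^ 1 \<le> (a/2) ^ m" using a m by (intro power_increasing) auto
  moreover have "t = (a/2) ^ m" unfolding t_def by (simp add: power_divide)
  ultimately have t: "t \<ge> 2 * real m" using a by simp
  have "exp (- t) * (1 + t) \<le> exp (- t) * exp t"
    by (intro mult_left_mono) auto
  hence "exp (- t) \<le> 1 / (1 + t)" using t by (simp add: exp_minus field_simps)
  hence "real m * exp (- t) \<le> real m / (1 + t)"
    using mult_left_mono[of "exp (- t)" "1 / (1 + t)" "real m"] by simp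
  also have "\<dots> < 1/2" using t m by (simp add: field_simps)
  finally have "real m * exp (- t) < 1/2" .
  moreover have "1 + real m * (- exp (- t)) \<le> (1 + (- exp (- t))) ^ m"
    by (rule Bernoulli_inequality) (use t in simp)
  ultimately have "profile m (a ^ m) (1/2) > 1/2"
    unfolding profile_def t_def by (simp add: power_divide)
  moreover have "profile m (a ^ m) (1/2) \<le> 1/2"
    using adm unfolding admissible_def by (auto dest: bspec[of _ _ "1/2"])
  ultimately show False by simp
qed

lemma closed_admissible: "closed (Collect (admissible m))"
proof -
  have "Collect (admissible m) = {a. 0 \<le> a} \<inter> (\<Inter>x\<in>{0<..1}. {a. profile m (a ^ m) x \<le> x})"
    unfolding admissible_def by auto
  moreover have "closed {a::real. profile m (a ^ m) x \<le> x}" for x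
    unfolding profile_def by (intro closed_Collect_le continuous_intros)
  moreover have "closed {a::real. 0 \<le> a}" by (simp add: closed_Collect_le)
  ultimately show ?thesis by (metis (no_types, lifting) closed_Int closed_INT)
qed

(* The GREATEST in the definition of alpha_bar exists: it is the supremum of the
   nonempty, bounded, closed admissible set. *)
lemma alpha_bar_greatest:
  assumes "j \<ge> 2"
  shows "admissible (j - 1) (alpha_bar j)" "\<And>a. admissible (j - 1) a \<Longrightarrow> a \<le> alpha_bar j"
proof -
  define S where "S = Collect (admissible (j - 1))"
  have "admissible (j - 1) 0"
    unfolding admissible_def profile_def using assms by (simp add: power_0_left)
  hence ne: "S \<noteq> {}" unfolding S_def by auto
  have bdd: "bdd_above S"
    unfolding S_def using admissible_le[of "j - 1"] assms
    by (intro bdd_aboveI[where M = "4 * real (j - 1)"]) auto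
  have mem: "Sup S \<in> S"
    using closed_contains_Sup[OF ne bdd] closed_admissible unfolding S_def by blast
  have upper: "a \<le> Sup S" if "admissible (j - 1) a" for a
    using cSup_upper[OF _ bdd] that unfolding S_def by blast
  have "alpha_bar j = (GREATEST a. admissible (j - 1) a)"
    unfolding alpha_bar_def admissible_def profile_def by simp
  also have "\<dots> = Sup S"
    using mem upper unfolding S_def by (intro Greatest_equality) auto
  finally show "admissible (j - 1) (alpha_bar j)" "\<And>a. admissible (j - 1) a \<Longrightarrow> a \<le> alpha_bar j"
    using mem upper unfolding S_def by auto
qed

(* Probability that a check-to-variable message is unverified, given the
   fraction x of unverified variable-to-check messages. *)
definition check_load :: "nat \<Rightarrow> nat \<Rightarrow> real \<Rightarrow> real \<Rightarrow> real" where
  "check_load m d \<delta> x = (1 - \<delta>) * (1 - (1 - x) ^ d) ^ m + x"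

definition lm1_map :: "nat \<Rightarrow> nat \<Rightarrow> real \<Rightarrow> real \<Rightarrow> real" where
  "lm1_map m d \<delta> x = \<delta> * (1 - (1 - check_load m d \<delta> x) ^ d) ^ m"

lemma lm1_seq_Suc: "lm1_seq j k \<delta> (Suc i) = lm1_map (j - 1) (k - 1) \<delta> (lm1_seq j k \<delta> i)"
  by (simp add: lm1_map_def check_load_def Let_def algebra_simps)

lemma isCont_lm1_map: "isCont (lm1_map m d \<delta>) x"
  unfolding lm1_map_def check_load_def by (intro continuous_intros)

lemma lm1_map_zero: "m \<ge> 1 \<Longrightarrow> lm1_map m d \<delta> 0 = 0"
  unfolding lm1_map_def check_load_def by (simp add: power_0_left)

lemma check_load_range:
  assumes "0 \<le> \<delta>" "\<delta> \<le> 1" "0 \<le> x" "x \<le> \<delta>"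
  shows "0 \<le> check_load m d \<delta> x" "check_load m d \<delta> x \<le> 1"
proof -
  define p where "p = 1 - (1 - x) ^ d"
  have p: "0 \<le> p" "p \<le> 1" using assms unfolding p_def by (auto intro: power_le_one)
  have "p ^ m \<le> 1" using p by (simp add: power_le_one)
  thus "0 \<le> check_load m d \<delta> x" "check_load m d \<delta> x \<le> 1"
    unfolding check_load_def p_def[symmetric]
    using assms p mult_left_le[of "p ^ m" "1 - \<delta>"] by auto
qed

lemma check_load_le:
  assumes "m \<ge> 1" "0 \<le> \<delta>" "\<delta> \<le> 1" "0 \<le> x" "x \<le> \<delta>"
  shows "check_load m d \<delta> x \<le> real d * x + x"
proof -
  define p where "p = 1 - (1 - x) ^ d"
  have p: "0 \<le> p" "p \<le> 1" "p \<le> real d * x"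
    using assms one_minus_pow_bounds[of x d] unfolding p_def by (auto intro: power_le_one)
  have "(1 - \<delta>) * p ^ m \<le> p ^ m" using p assms by (simp add: mult_left_le_one_le)
  also have "\<dots> \<le> p ^ 1" using p assms by (intro power_decreasing) auto
  finally show ?thesis unfolding check_load_def p_def[symmetric] using p by simp
qed

lemma lm1_map_range:
  assumes "0 \<le> \<delta>" "\<delta> \<le> 1" "0 \<le> x" "x \<le> \<delta>"
  shows "0 \<le> lm1_map m d \<delta> x" "lm1_map m d \<delta> x \<le> \<delta>"
proof -
  have u: "0 \<le> check_load m d \<delta> x" "check_load m d \<delta> x \<le> 1"
    using check_load_range[OF assms] by auto
  hence q: "0 \<le> 1 - (1 - check_load m d \<delta> x) ^ d" "1 - (1 - check_load m d \<delta> x) ^ d \<le> 1"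
    by (auto intro: power_le_one)
  hence "(1 - (1 - check_load m d \<delta> x) ^ d) ^ m \<le> 1" by (simp add: power_le_one)
  thus "0 \<le> lm1_map m d \<delta> x" "lm1_map m d \<delta> x \<le> \<delta>"
    unfolding lm1_map_def using assms q by (auto intro: mult_left_le)
qed

lemma check_load_bounds:
  assumes "0 < \<delta>" "\<delta> \<le> 1" "\<epsilon> = real d * \<delta>" "real d * \<epsilon> ^ m = \<alpha> ^ m"
    and "0 \<le> y" "y \<le> 1"
  shows "real d * check_load m d \<delta> (\<delta> * y) \<le> \<alpha> ^ m * y ^ m + \<epsilon> * y"
    "(1 - \<delta>) / (1 + \<epsilon>) ^ m * \<alpha> ^ m * y ^ m \<le> real d * check_load m d \<delta> (\<delta> * y)"
proof -
  define p where "p = 1 - (1 - \<delta> * y) ^ d"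
  have x: "0 \<le> \<delta> * y" "\<delta> * y \<le> 1" using assms by (auto intro: mult_le_one)
  have dx: "real d * (\<delta> * y) = \<epsilon> * y" using assms by simp
  have e0: "0 \<le> \<epsilon>" using assms by simp
  have ey0: "0 \<le> \<epsilon> * y" using e0 assms by simp
  have scale: "real d * (\<epsilon> * y) ^ m = \<alpha> ^ m * y ^ m"
    using assms by (simp add: power_mult_distrib)
  have load: "real d * check_load m d \<delta> (\<delta> * y) = real d * ((1 - \<delta>) * p ^ m) + \<epsilon> * y"
    unfolding check_load_def p_def using dx by (simp add: distrib_left)
  have p: "\<epsilon> * y / (1 + \<epsilon> * y) \<le> p" "p \<le> \<epsilon> * y"
    using one_minus_pow_bounds[OF x, of d] unfolding p_def dx by auto
  have p0: "0 \<le> p" unfolding p_def using x by (simp add: power_le_one)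
  have "(1 - \<delta>) * p ^ m \<le> (\<epsilon> * y) ^ m"
    using p p0 assms mult_left_le_one_le[of "p ^ m" "1 - \<delta>"] power_mono[of p "\<epsilon> * y" m] by auto
  hence "real d * ((1 - \<delta>) * p ^ m) \<le> \<alpha> ^ m * y ^ m"
    using scale mult_left_mono[of _ _ "real d"] by fastforce
  thus "real d * check_load m d \<delta> (\<delta> * y) \<le> \<alpha> ^ m * y ^ m + \<epsilon> * y"
    unfolding load by simp
  have "\<epsilon> * y / (1 + \<epsilon>) \<le> \<epsilon> * y / (1 + \<epsilon> * y)"
  proof (rule divide_left_mono)
    show "0 < (1 + \<epsilon>) * (1 + \<epsilon> * y)" using e0 ey0 by (simp add: add_pos_nonneg)
  qed (use assms e0 in \<open>auto intro: mult_left_le\<close>)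
  hence "(\<epsilon> * y / (1 + \<epsilon>)) ^ m \<le> p ^ m"
    using p(1) e0 assms by (intro power_mono) auto
  hence "real d * ((1 - \<delta>) * (\<epsilon> * y / (1 + \<epsilon>)) ^ m) \<le> real d * ((1 - \<delta>) * p ^ m)"
    using assms by (intro mult_left_mono) auto
  moreover have "real d * ((1 - \<delta>) * (\<epsilon> * y / (1 + \<epsilon>)) ^ m)
      = (1 - \<delta>) / (1 + \<epsilon>) ^ m * \<alpha> ^ m * y ^ m"
    using scale by (simp add: power_divide)
  ultimately show
    "(1 - \<delta>) / (1 + \<epsilon>) ^ m * \<alpha> ^ m * y ^ m \<le> real d * check_load m d \<delta> (\<delta> * y)"
    unfolding load using ey0 by linarith
qed

lemma lm1_map_upper:
  assumes "m \<ge> 1" "0 < \<delta>" "\<delta> \<le> 1/8" "\<epsilon> = real d * \<delta>" "\<epsilon> \<le> 1/8"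
    and "real d * \<epsilon> ^ m = \<alpha> ^ m" "0 \<le> y" "y \<le> 1"
  shows "lm1_map m d \<delta> (\<delta> * y)
           \<le> \<delta> * (1 - exp (- ((\<alpha> ^ m * y ^ m + \<epsilon> * y) * (1 + 2 * (\<epsilon> + \<delta>))))) ^ m"
proof -
  define u where "u = check_load m d \<delta> (\<delta> * y)"
  define W where "W = (\<alpha> ^ m * y ^ m + \<epsilon> * y) * (1 + 2 * (\<epsilon> + \<delta>))"
  have x: "0 \<le> \<delta> * y" "\<delta> * y \<le> \<delta>" using assms by (auto intro: mult_left_le)
  have u0: "0 \<le> u" using check_load_range[OF _ _ x] assms unfolding u_def by simp
  have du: "real d * u \<le> \<alpha> ^ m * y ^ m + \<epsilon> * y"
    using check_load_bounds[of \<delta> \<epsilon> d m \<alpha> y] assms unfolding u_def by simp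
  have "u \<le> (\<epsilon> + \<delta>) * y"
    using check_load_le[OF _ _ _ x] assms unfolding u_def by (simp add: algebra_simps)
  also have "\<dots> \<le> \<epsilon> + \<delta>" using assms by (intro mult_left_le) auto
  finally have u_small: "u \<le> \<epsilon> + \<delta>" .
  have d0: "0 \<le> real d * u" using u0 by simp
  have "real d * u * (1 + 2 * u) \<le> (\<alpha> ^ m * y ^ m + \<epsilon> * y) * (1 + 2 * u)"
    using du u0 by (intro mult_right_mono) auto
  also have "\<dots> \<le> W"
    unfolding W_def using u_small d0 du by (intro mult_left_mono) auto
  finally have "exp (- W) \<le> exp (- (real d * u * (1 + 2 * u)))" by simp
  also have "\<dots> \<le> (1 - u) ^ d" using u0 u_small assms by (intro exp_le_one_minus_pow) auto
  finally have "1 - (1 - u) ^ d \<le> 1 - exp (- W)" by simp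
  moreover have "0 \<le> 1 - (1 - u) ^ d" using u0 u_small assms by (auto intro: power_le_one)
  ultimately have "(1 - (1 - u) ^ d) ^ m \<le> (1 - exp (- W)) ^ m" by (intro power_mono)
  thus ?thesis unfolding lm1_map_def u_def[symmetric] W_def[symmetric] using assms
    by (intro mult_left_mono) auto
qed

lemma lm1_map_lower:
  assumes "0 < \<delta>" "\<delta> \<le> 1" "\<epsilon> = real d * \<delta>" "real d * \<epsilon> ^ m = \<alpha> ^ m"
    and "0 \<le> y" "y \<le> 1"
  shows "\<delta> * profile m ((1 - \<delta>) / (1 + \<epsilon>) ^ m * \<alpha> ^ m) y \<le> lm1_map m d \<delta> (\<delta> * y)"
proof -
  define u where "u = check_load m d \<delta> (\<delta> * y)"
  define c where "c = (1 - \<delta>) / (1 + \<epsilon>) ^ m * \<alpha> ^ m"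
  have x: "0 \<le> \<delta> * y" "\<delta> * y \<le> \<delta>" using assms by (auto intro: mult_left_le)
  have u1: "u \<le> 1" using check_load_range[OF _ _ x] assms unfolding u_def by simp
  have cu: "c * y ^ m \<le> real d * u"
    using check_load_bounds[of \<delta> \<epsilon> d m \<alpha> y] assms unfolding u_def c_def by simp
  have "0 \<le> real d * \<epsilon> ^ m" using assms(1,3) by simp
  hence "0 \<le> \<alpha> ^ m" using assms(4) by linarith
  hence "c * y ^ m \<ge> 0"
    unfolding c_def using assms by (intro mult_nonneg_nonneg divide_nonneg_nonneg) auto
  have "(1 - u) ^ d \<le> exp (- (real d * u))" using u1 by (rule one_minus_pow_le_exp)
  also have "\<dots> \<le> exp (- (c * y ^ m))" using cu by simp
  finally have "1 - exp (- (c * y ^ m)) \<le> 1 - (1 - u) ^ d" by simp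
  moreover have "0 \<le> 1 - exp (- (c * y ^ m))" using \<open>c * y ^ m \<ge> 0\<close> by simp
  ultimately have "profile m c y \<le> (1 - (1 - u) ^ d) ^ m"
    unfolding profile_def by (intro power_mono)
  thus ?thesis unfolding lm1_map_def u_def[symmetric] c_def[symmetric] using assms
    by (intro mult_left_mono) auto
qed

lemma profile_below_diagonal:
  assumes "m \<ge> 1" "admissible m ab" "0 \<le> a1" "a1 < ab" "0 < y" "y \<le> 1" "0 \<le> W"
    and "W \<le> a1 ^ m * y ^ m \<or> W < y"
  shows "(1 - exp (- W)) ^ m < y"
  using assms(8)
proof
  assume W: "W \<le> a1 ^ m * y ^ m"
  have "(1 - exp (- W)) ^ m \<le> profile m (a1 ^ m) y"
    unfolding profile_def using W assms by (intro power_mono) auto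
  also have "\<dots> < profile m (ab ^ m) y"
    using assms by (intro profile_strict_mono_coeff power_strict_mono) auto
  also have "\<dots> \<le> y" using assms unfolding admissible_def by auto
  finally show ?thesis .
next
  assume W: "W < y"
  have "(1 - exp (- W)) ^ m \<le> (1 - exp (- W)) ^ 1"
    using assms by (intro power_decreasing) auto
  also have "\<dots> \<le> W" using exp_ge_add_one_self[of "- W"] by simp
  finally show ?thesis using W by simp
qed

(* If alpha < a1 < ab with ab admissible and the perturbation is small enough,
   a step strictly decreases every point of (0, delta].  The linear term eps y
   is absorbed into the profile when alpha^m y^(m-1) >= 1/4 and is harmless
   otherwise. *)
lemma lm1_map_below_diagonal:
  assumes m: "m \<ge> 1" and adm: "admissible m ab" and a1: "0 \<le> a1" "a1 < ab"
    and \<delta>: "0 < \<delta>" "\<delta> \<le> 1/8" and \<epsilon>: "\<epsilon> = real d * \<delta>" "\<epsilon> \<le> 1/8"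
    and scale: "real d * \<epsilon> ^ m = \<alpha> ^ m"
    and close: "\<alpha> ^ m * (1 + 4 * \<epsilon>) * (1 + 2 * (\<epsilon> + \<delta>)) \<le> a1 ^ m"
    and y: "0 < y" "y \<le> 1"
  shows "lm1_map m d \<delta> (\<delta> * y) < \<delta> * y"
proof -
  define W where "W = (\<alpha> ^ m * y ^ m + \<epsilon> * y) * (1 + 2 * (\<epsilon> + \<delta>))"
  obtain n where n: "m = Suc n" using m by (cases m) auto
  have e0: "0 \<le> \<epsilon>" using \<epsilon> \<delta> by simp
  have "0 \<le> real d * \<epsilon> ^ m" using e0 by simp
  hence a0: "0 \<le> \<alpha> ^ m" using scale by linarith
  have W0: "0 \<le> W" unfolding W_def using a0 e0 \<delta> y by simp
  have "W \<le> a1 ^ m * y ^ m \<or> W < y"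
  proof (cases "\<alpha> ^ m * y ^ n \<ge> 1/4")
    case True
    have "\<epsilon> * y \<le> \<epsilon> * (4 * (\<alpha> ^ m * y ^ n) * y)"
      using True e0 y by (intro mult_left_mono) auto
    hence "\<alpha> ^ m * y ^ m + \<epsilon> * y \<le> \<alpha> ^ m * (1 + 4 * \<epsilon>) * y ^ m"
      unfolding n by (simp add: algebra_simps)
    hence "W \<le> \<alpha> ^ m * (1 + 4 * \<epsilon>) * y ^ m * (1 + 2 * (\<epsilon> + \<delta>))"
      unfolding W_def using e0 \<delta> by (intro mult_right_mono) auto
    also have "\<dots> \<le> a1 ^ m * y ^ m"
      using close y by (simp add: mult.commute mult.left_commute mult_left_mono)
    finally show ?thesis ..
  next
    case False
    have "\<alpha> ^ m * y ^ m + \<epsilon> * y = (\<alpha> ^ m * y ^ n + \<epsilon>) * y"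
      unfolding n by (simp add: algebra_simps)
    also have "\<dots> \<le> (3/8) * y" using False \<epsilon> y by (intro mult_right_mono) auto
    finally have "W \<le> (3/8) * y * (1 + 2 * (\<epsilon> + \<delta>))"
      unfolding W_def using e0 \<delta> by (intro mult_right_mono) auto
    also have "\<dots> \<le> (3/8) * y * (3/2)" using \<epsilon> \<delta> y by (intro mult_left_mono) auto
    also have "\<dots> < y" using y by simp
    finally show ?thesis ..
  qed
  hence "(1 - exp (- W)) ^ m < y"
    using profile_below_diagonal[OF m adm a1 y W0] by blast
  hence "\<delta> * (1 - exp (- W)) ^ m < \<delta> * y" using \<delta> by simp
  moreover have "lm1_map m d \<delta> (\<delta> * y) \<le> \<delta> * (1 - exp (- W)) ^ m"
    unfolding W_def using lm1_map_upper[OF m \<delta> \<epsilon>(1) \<epsilon>(2) scale] y by simp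
  ultimately show ?thesis by linarith
qed

(* The scaled degree parameter eps = (k - 1) * delta. *)
definition lm1_eps :: "nat \<Rightarrow> nat \<Rightarrow> real \<Rightarrow> real" where
  "lm1_eps j k \<alpha> = \<alpha> * (real k - 1) powr (- 1 / real (j - 1))"

lemma lm1_scaling:
  assumes j: "j \<ge> 2" and k: "k \<ge> 2"
  shows "lm1_eps j k \<alpha> = real (k - 1) * lm1_delta j k \<alpha>"
    "real (k - 1) * lm1_eps j k \<alpha> ^ (j - 1) = \<alpha> ^ (j - 1)"
proof -
  define d where "d = real k - 1"
  have d: "d \<ge> 1" using k unfolding d_def by simp
  have rk: "real (k - 1) = d" using k unfolding d_def by (simp add: of_nat_diff)
  have rj: "real (j - 1) = real j - 1" using j by (simp add: of_nat_diff)
  have "1 + (- (real j / (real j - 1))) = - 1 / (real j - 1)"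
    using j by (simp add: field_simps)
  moreover have "d * d powr (- (real j / (real j - 1))) = d powr (1 + (- (real j / (real j - 1))))"
    using d by (simp only: powr_add powr_one)
  ultimately show "lm1_eps j k \<alpha> = real (k - 1) * lm1_delta j k \<alpha>"
    unfolding lm1_eps_def lm1_delta_def rk rj d_def[symmetric] by simp
  have "(d powr (- 1 / real (j - 1))) ^ (j - 1) = (d powr (- 1 / real (j - 1))) powr real (j - 1)"
    using d by (simp add: powr_realpow)
  also have "\<dots> = 1 / d" unfolding powr_powr using j d by (simp add: powr_minus inverse_eq_divide)
  finally show "real (k - 1) * lm1_eps j k \<alpha> ^ (j - 1) = \<alpha> ^ (j - 1)"
    unfolding lm1_eps_def rk d_def[symmetric] using d by (simp add: power_mult_distrib)
qed

lemma lm1_delta_pos: "\<alpha> > 0 \<Longrightarrow> k \<ge> 2 \<Longrightarrow> 0 < lm1_delta j k \<alpha>"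
  unfolding lm1_delta_def by simp

lemma lm1_params_tendsto_zero:
  assumes "j \<ge> 2"
  shows "(\<lambda>k. lm1_delta j k \<alpha>) \<longlonglongrightarrow> 0" "(\<lambda>k. lm1_eps j k \<alpha>) \<longlonglongrightarrow> 0"
proof -
  have km1: "filterlim (\<lambda>k::nat. real k - 1) at_top sequentially"
    using filterlim_tendsto_add_at_top[OF tendsto_const[of "-1::real"] filterlim_real_sequentially]
    by simp
  have "(\<lambda>k. (real k - 1) powr (- (real j / (real j - 1)))) \<longlonglongrightarrow> 0"
    using assms by (intro tendsto_neg_powr[OF _ km1]) simp
  from tendsto_mult_right_zero[OF this, of \<alpha>]
  show "(\<lambda>k. lm1_delta j k \<alpha>) \<longlonglongrightarrow> 0" unfolding lm1_delta_def .
  have "(\<lambda>k. (real k - 1) powr (- 1 / real (j - 1))) \<longlonglongrightarrow> 0"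
    using assms by (intro tendsto_neg_powr[OF _ km1]) simp
  from tendsto_mult_right_zero[OF this, of \<alpha>]
  show "(\<lambda>k. lm1_eps j k \<alpha>) \<longlonglongrightarrow> 0" unfolding lm1_eps_def .
qed

lemma iterates_tendsto_zero:
  fixes s :: "nat \<Rightarrow> real" and g :: "real \<Rightarrow> real"
  assumes s0: "0 \<le> s 0" "s 0 \<le> \<delta>" and step: "\<And>n. s (Suc n) = g (s n)"
    and cont: "\<And>x. isCont g x" and g0: "g 0 = 0"
    and into: "\<And>x. 0 \<le> x \<Longrightarrow> x \<le> \<delta> \<Longrightarrow> 0 \<le> g x"
    and below: "\<And>x. 0 < x \<Longrightarrow> x \<le> \<delta> \<Longrightarrow> g x < x"
  shows "s \<longlonglongrightarrow> 0"
proof -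
  have le: "g x \<le> x" if "0 \<le> x" "x \<le> \<delta>" for x
    using that g0 below[of x] by (cases "x = 0") auto
  have inv: "0 \<le> s n \<and> s n \<le> \<delta>" for n
    by (induction n) (use s0 step into le in \<open>fastforce+\<close>)
  have "decseq s" unfolding decseq_Suc_iff using inv step le by simp
  then obtain L where L: "s \<longlonglongrightarrow> L" "\<And>n. L \<le> s n"
    using decseq_convergent[of s 0] inv by blast
  have L_range: "0 \<le> L" "L \<le> \<delta>"
    using LIMSEQ_le_const[OF L(1)] inv L(2)[of 0] by (auto intro: order_trans)
  have "(\<lambda>n. g (s n)) \<longlonglongrightarrow> g L" using cont L(1) by (rule isCont_tendsto_compose)
  moreover have "(\<lambda>n. g (s n)) \<longlonglongrightarrow> L" using LIMSEQ_Suc[OF L(1)] unfolding step .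
  ultimately have "g L = L" using LIMSEQ_unique by blast
  hence "L = 0" using below[of L] L_range by (cases "L = 0") auto
  thus ?thesis using L(1) by simp
qed

lemma lm1_success_below_threshold:
  assumes j: "j \<ge> 2" and \<alpha>: "\<alpha> > 0" "\<alpha> < alpha_bar j"
  shows "\<exists>K::nat. \<forall>k\<ge>K. k \<ge> 2 \<and> lm1_delta j k \<alpha> \<le> 1 \<longrightarrow>
           lm1_seq j k (lm1_delta j k \<alpha>) \<longlonglongrightarrow> 0"
proof -
  define m where "m = j - 1"
  have m: "m \<ge> 1" using j unfolding m_def by simp
  define ab where "ab = alpha_bar j"
  have adm: "admissible m ab" using alpha_bar_greatest(1)[OF j] unfolding m_def ab_def .
  define a1 where "a1 = (\<alpha> + ab) / 2"
  have a1: "0 \<le> a1" "a1 < ab" "\<alpha> ^ m < a1 ^ m"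
    using \<alpha> m unfolding a1_def ab_def by (auto intro: power_strict_mono)
  define \<delta> where "\<delta> k = lm1_delta j k \<alpha>" for k
  define \<epsilon> where "\<epsilon> k = lm1_eps j k \<alpha>" for k
  have "(\<lambda>k. \<alpha> ^ m * (1 + 4 * \<epsilon> k) * (1 + 2 * (\<epsilon> k + \<delta> k)))
          \<longlonglongrightarrow> \<alpha> ^ m * (1 + 4 * 0) * (1 + 2 * (0 + 0))"
    using lm1_params_tendsto_zero[OF j] unfolding \<delta>_def \<epsilon>_def by (intro tendsto_intros)
  hence "eventually (\<lambda>k. \<alpha> ^ m * (1 + 4 * \<epsilon> k) * (1 + 2 * (\<epsilon> k + \<delta> k)) < a1 ^ m) sequentially"
    using a1 by (intro order_tendstoD(2)) auto
  moreover have "eventually (\<lambda>k. \<epsilon> k < 1/8 \<and> \<delta> k < 1/8) sequentially"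
    using lm1_params_tendsto_zero[OF j] unfolding \<delta>_def \<epsilon>_def
    by (intro eventually_conj order_tendstoD(2)) auto
  ultimately have "eventually (\<lambda>k. \<alpha> ^ m * (1 + 4 * \<epsilon> k) * (1 + 2 * (\<epsilon> k + \<delta> k)) < a1 ^ m
      \<and> \<epsilon> k < 1/8 \<and> \<delta> k < 1/8) sequentially"
    by (rule eventually_conj)
  then obtain K where K: "\<And>k. k \<ge> K \<Longrightarrow> \<alpha> ^ m * (1 + 4 * \<epsilon> k) * (1 + 2 * (\<epsilon> k + \<delta> k)) < a1 ^ m
      \<and> \<epsilon> k < 1/8 \<and> \<delta> k < 1/8"
    unfolding eventually_sequentially by blast
  show ?thesis
  proof (intro exI allI impI)
    fix k assume "K \<le> k" "k \<ge> 2 \<and> lm1_delta j k \<alpha> \<le> 1"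
    hence k: "k \<ge> 2" and Kk: "\<epsilon> k < 1/8" "\<delta> k < 1/8"
        "\<alpha> ^ m * (1 + 4 * \<epsilon> k) * (1 + 2 * (\<epsilon> k + \<delta> k)) < a1 ^ m"
      using K by auto
    have \<delta>0: "0 < \<delta> k" unfolding \<delta>_def using lm1_delta_pos \<alpha> k by blast
    have \<epsilon>\<delta>: "\<epsilon> k = real (k - 1) * \<delta> k" and scale: "real (k - 1) * \<epsilon> k ^ m = \<alpha> ^ m"
      using lm1_scaling[OF j k] unfolding \<delta>_def \<epsilon>_def m_def by auto
    have below: "lm1_map m (k - 1) (\<delta> k) x < x" if "0 < x" "x \<le> \<delta> k" for x
      using lm1_map_below_diagonal[OF m adm a1(1,2) \<delta>0 _ \<epsilon>\<delta> _ scale, of "x / \<delta> k"] Kk that \<delta>0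
      by simp
    have "lm1_seq j k (\<delta> k) \<longlonglongrightarrow> 0"
    proof (rule iterates_tendsto_zero)
      show "lm1_seq j k (\<delta> k) (Suc n) = lm1_map m (k - 1) (\<delta> k) (lm1_seq j k (\<delta> k) n)" for n
        unfolding m_def by (rule lm1_seq_Suc)
    qed (use below \<delta>0 Kk m k in \<open>auto intro: isCont_lm1_map lm1_map_zero lm1_map_range\<close>)
    thus "lm1_seq j k (lm1_delta j k \<alpha>) \<longlonglongrightarrow> 0" unfolding \<delta>_def .
  qed
qed

(* Part (b): above the threshold the iterates stay in [delta * y, delta] for a
   point y where the profile exceeds the diagonal, for all large k. *)
lemma lm1_failure_above_threshold:
  assumes j: "j \<ge> 2" and \<alpha>: "\<alpha> > alpha_bar j"
  shows "\<exists>K::nat. \<forall>k\<ge>K. k \<ge> 2 \<and> lm1_delta j k \<alpha> \<le> 1 \<longrightarrow>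
           \<not> lm1_seq j k (lm1_delta j k \<alpha>) \<longlonglongrightarrow> 0"
proof -
  define m where "m = j - 1"
  have "alpha_bar j \<ge> 0" using alpha_bar_greatest(1)[OF j] unfolding admissible_def by simp
  hence "\<not> admissible m \<alpha>" "\<alpha> > 0"
    using alpha_bar_greatest(2)[OF j, of \<alpha>] \<alpha> unfolding m_def by auto
  then obtain y where y: "0 < y" "y \<le> 1" "profile m (\<alpha> ^ m) y > y"
    unfolding admissible_def by (auto simp: not_le)
  define \<delta> where "\<delta> k = lm1_delta j k \<alpha>" for k
  define \<epsilon> where "\<epsilon> k = lm1_eps j k \<alpha>" for k
  define c where "c k = (1 - \<delta> k) / (1 + \<epsilon> k) ^ m * \<alpha> ^ m" for k
  have "(\<lambda>k. profile m (c k) y) \<longlonglongrightarrow> profile m ((1 - 0) / (1 + 0) ^ m * \<alpha> ^ m) y"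
    using lm1_params_tendsto_zero[OF j] unfolding profile_def c_def \<delta>_def \<epsilon>_def
    by (intro tendsto_intros) auto
  hence "eventually (\<lambda>k. profile m (c k) y > y) sequentially"
    using y by (intro order_tendstoD(1)) auto
  then obtain K where K: "\<And>k. k \<ge> K \<Longrightarrow> profile m (c k) y > y"
    unfolding eventually_sequentially by blast
  show ?thesis
  proof (intro exI allI impI)
    fix k assume "K \<le> k" "k \<ge> 2 \<and> lm1_delta j k \<alpha> \<le> 1"
    hence k: "k \<ge> 2" and \<delta>1: "\<delta> k \<le> 1" and Kk: "profile m (c k) y > y"
      using K unfolding \<delta>_def by auto
    have \<delta>0: "0 < \<delta> k" unfolding \<delta>_def using lm1_delta_pos \<alpha> k \<open>\<alpha> > 0\<close> by blast
    have \<epsilon>\<delta>: "\<epsilon> k = real (k - 1) * \<delta> k" and scale: "real (k - 1) * \<epsilon> k ^ m = \<alpha> ^ m"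
      using lm1_scaling[OF j k] unfolding \<delta>_def \<epsilon>_def m_def by auto
    have c0: "0 \<le> c k" unfolding c_def using \<delta>1 \<delta>0 \<epsilon>\<delta> \<open>\<alpha> > 0\<close>
      by (intro mult_nonneg_nonneg divide_nonneg_nonneg) auto
    have step: "\<delta> k * y \<le> lm1_map m (k - 1) (\<delta> k) x" if "\<delta> k * y \<le> x" "x \<le> \<delta> k" for x
    proof -
      have "0 < x" using that(1) mult_pos_pos[OF \<delta>0 y(1)] by linarith
      hence yx: "y \<le> x / \<delta> k" "0 \<le> x / \<delta> k" "x / \<delta> k \<le> 1"
        using that \<delta>0 by (auto simp: field_simps)
      have "y < profile m (c k) (x / \<delta> k)"
        using Kk profile_mono_arg[OF c0 _ yx(1), of m] y by linarith
      hence "\<delta> k * y < \<delta> k * profile m (c k) (x / \<delta> k)" using \<delta>0 by simp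
      also have "\<dots> \<le> lm1_map m (k - 1) (\<delta> k) x"
        using lm1_map_lower[OF \<delta>0 \<delta>1 \<epsilon>\<delta> scale yx(2,3)] \<delta>0 unfolding c_def by simp
      finally show ?thesis by simp
    qed
    have bound: "\<delta> k * y \<le> lm1_seq j k (\<delta> k) n \<and> lm1_seq j k (\<delta> k) n \<le> \<delta> k" for n
    proof (induction n)
      case 0 show ?case using y \<delta>0 by (simp add: mult_left_le)
    next
      case (Suc n)
      have "0 \<le> lm1_seq j k (\<delta> k) n" using Suc.IH mult_pos_pos[OF \<delta>0 y(1)] by linarith
      thus ?case using Suc.IH step lm1_map_range[of "\<delta> k" "lm1_seq j k (\<delta> k) n"] \<delta>0 \<delta>1
        unfolding lm1_seq_Suc m_def[symmetric] by auto
    qed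
    show "\<not> lm1_seq j k (lm1_delta j k \<alpha>) \<longlonglongrightarrow> 0"
    proof
      assume "lm1_seq j k (lm1_delta j k \<alpha>) \<longlonglongrightarrow> 0"
      hence "\<delta> k * y \<le> 0" using bound unfolding \<delta>_def by (intro LIMSEQ_le_const) auto
      thus False using \<delta>0 y by (simp add: mult_le_0_iff)
    qed
  qed
qed

theorem theorem3:
  fixes j :: nat and \<alpha> :: real
  assumes "j \<ge> 2" and "\<alpha> > 0"
  shows "(\<alpha> < alpha_bar j \<longrightarrow>
            (\<exists>K1::nat. \<forall>k\<ge>K1. k \<ge> 2 \<and> lm1_delta j k \<alpha> \<le> 1 \<longrightarrow>
               (lm1_seq j k (lm1_delta j k \<alpha>)) \<longlonglongrightarrow> 0))
       \<and> (\<alpha> > alpha_bar j \<longrightarrow>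
            (\<exists>K2::nat. \<forall>k\<ge>K2. k \<ge> 2 \<and> lm1_delta j k \<alpha> \<le> 1 \<longrightarrow>
               \<not> ((lm1_seq j k (lm1_delta j k \<alpha>)) \<longlonglongrightarrow> 0)))"
  using lm1_success_below_threshold[OF assms] lm1_failure_above_threshold[OF assms(1)] by blast

end
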